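(* Let $S \geq 2$ and let $f:\{1,\dots,S\}\to\{1,\dots,S\}$ be a uniformly random map, i.e. the values $f(1),\dots,f(S)$ are independent and each is uniformly distributed on $\{1,\dots,S\}$. Define $C_1,\dots,C_S$ and $C$ as in the context. Then $$\mathrm{E}(C) < \mathrm{E}(C_1)\,(\ln S + 1),$$ and there is a constant $K>0$, independent of $S$, such that $\mathrm{Var}(C) \leq K\, S \ln S$ for all $S \geq 2$.
   Context: Setting: the random map $f$ models the state-to-state dynamics of an agent following a deterministic policy in an environment with a deterministic transition function whose prior is uniform, so that from each state $s$ the next state $f(s)$ is uniformly distributed over the $S$ states, independently across states. Construction of the cycles. Start at state $1$ and follow the orbit $1, f(1), f(f(1)),\dots$ until a previously visited state is reached for the first time; from that point the orbit is periodic, and $\mathcal{C}_1$ is the set of states on this cycle, with $C_1 = |\mathcal{C}_1|$. Inductively, for $i = 2,\dots,S$, start at state $i$ and follow its orbit under $f$ until it reaches a state already visited either earlier in this same orbit or in one of the orbits started from $1,\dots,i-1$. If it first reaches a state already visited earlier in its own orbit (call this event $T_i$; $T_1$ always occurs), the orbit from $i$ has closed a new cycle, $\mathcal{C}_i$ is the set of states on that cycle and $C_i = |\mathcal{C}_i|$. Otherwise the orbit has run into a path or cycle produced by an earlier starting state; then $\mathcal{C}_i = \emptyset$ and $C_i = 0$. Set $\mathcal{C} = \mathcal{C}_1\cup\dots\cup\mathcal{C}_S$ and $C = |\mathcal{C}| = \sum_{i=1}^S C_i$; equivalently, $C$ is the number of states lying on a cycle of $f$. All expectations and variances are taken with respect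 to the randomness of $f$, and $\ln$ denotes the natural logarithm. *)

theory Defs
  imports "HOL-Probability.Probability"
begin

text \<open>States are 1..S. A map on the state space is an extensional function
  (value undefined outside 1..S).\<close>
definition maps :: "nat \<Rightarrow> (nat \<Rightarrow> nat) set" where
  "maps S = {1..S} \<rightarrow>\<^sub>E {1..S}"

text \<open>Uniformly random map: f(1),...,f(S) independent, uniform on 1..S.\<close>
definition rmap :: "nat \<Rightarrow> (nat \<Rightarrow> nat) pmf" where
  "rmap S = pmf_of_set (maps S)"

definition cyc_states :: "nat \<Rightarrow> (nat \<Rightarrow> nat) \<Rightarrow> nat set" where
  "cyc_states S f = {s \<in> {1..S}. \<exists>n>0. (f ^^ n) s = s}"

definition numC :: "nat \<Rightarrow> (nat \<Rightarrow> nat) \<Rightarrow> nat" where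
  "numC S f = card (cyc_states S f)"

definition cycle1 :: "nat \<Rightarrow> (nat \<Rightarrow> nat) \<Rightarrow> nat set" where
  "cycle1 S f = {s \<in> cyc_states S f. \<exists>n. (f ^^ n) 1 = s}"

definition numC1 :: "nat \<Rightarrow> (nat \<Rightarrow> nat) \<Rightarrow> nat" where
  "numC1 S f = card (cycle1 S f)"

end

theory Submission
  imports Defs
begin

text \<open>From a state \<open>s\<close> the orbit of a map \<open>f\<close> runs through a list \<open>xs\<close> of distinct
  states and then re-enters it at some index \<open>j\<close>.  Exactly \<open>S ^ (S - length xs)\<close> maps have
  a given such \<open>\<rho>\<close>-shaped orbit, so summing over orbits computes expectations.  This gives
  \<open>E(C) = Q(S) = \<Sum>\<^sub>k S!/((S - k)! S\<^sup>k)\<close> (Ramanujan's Q-function) and \<open>E(C\<^sub>1) = (1 + Q(S))/2\<close>;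
  with \<open>Q(S) \<le> S\<close> and \<open>ln S \<ge> 1 - 1/S\<close> the first inequality follows.  For the variance,
  two cyclic states on different cycles force \<open>f\<close> on two disjoint cycles, so such pairs are
  negatively correlated, while the pairs on a common cycle contribute \<open>E(\<Sum> |cycle|\<^sup>2) = S\<close>.
  Hence \<open>E(C\<^sup>2) \<le> S + Q(S)\<^sup>2\<close>, i.e. \<open>Var(C) \<le> S\<close>.\<close>

section \<open>Maps with prescribed values\<close>

lemma finite_maps: "finite (maps S)"
  unfolding maps_def by (simp add: finite_PiE)

lemma card_maps: "card (maps S) = S ^ S"
  unfolding maps_def by (simp add: card_PiE)

lemma maps_nonempty: "maps S \<noteq> {}"
  unfolding maps_def by (simp add: PiE_eq_empty_iff)

lemma card_PiE_fixed_on: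
  assumes "finite A" "D \<subseteq> A" "g ` D \<subseteq> B"
  shows "card {f \<in> A \<rightarrow>\<^sub>E B. \<forall>x\<in>D. f x = g x} = card B ^ card (A - D)"
proof -
  have "{f \<in> A \<rightarrow>\<^sub>E B. \<forall>x\<in>D. f x = g x} = (\<Pi>\<^sub>E x\<in>A. if x \<in> D then {g x} else B)"
    using assms(2,3) by (auto simp: PiE_def Pi_def extensional_def image_subset_iff split: if_splits)
  then have "card {f \<in> A \<rightarrow>\<^sub>E B. \<forall>x\<in>D. f x = g x} = (\<Prod>x\<in>A. if x \<in> D then 1 else card B)"
    using assms(1) by (auto simp: card_PiE intro!: prod.cong)
  also have "\<dots> = card B ^ card (A - D)"
    using assms(1) by (simp add: prod.If_cases Diff_eq)
  finally show ?thesis .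
qed

lemma card_maps_map_eq:
  assumes "distinct xs" "length ys = length xs" "set xs \<subseteq> {1..S}" "set ys \<subseteq> {1..S}"
  shows "card {f \<in> maps S. map f xs = ys} = S ^ (S - length xs)"
proof -
  define g where "g x = the (map_of (zip xs ys) x)" for x
  have g_nth: "g (xs ! i) = ys ! i" if "i < length xs" for i
    using map_of_zip_nth[OF assms(2)[symmetric] assms(1)] that assms(2) by (simp add: g_def)
  have map_eq_iff: "map f xs = ys \<longleftrightarrow> (\<forall>x\<in>set xs. f x = g x)" for f
    using assms(2) by (auto simp: list_eq_iff_nth_eq in_set_conv_nth g_nth dest!: bspec[OF _ nth_mem])
  have g_range: "g ` set xs \<subseteq> {1..S}"
  proof
    fix y assume "y \<in> g ` set xs"
    then obtain i where "i < length xs" "y = ys ! i" by (auto simp: in_set_conv_nth g_nth)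
    then show "y \<in> {1..S}" using assms(2,4) nth_mem by (metis subsetD)
  qed
  have "{f \<in> maps S. map f xs = ys} = {f \<in> {1..S} \<rightarrow>\<^sub>E {1..S}. \<forall>x\<in>set xs. f x = g x}"
    by (simp add: maps_def map_eq_iff)
  also have "card \<dots> = S ^ card ({1..S} - set xs)"
    using assms(3) g_range by (simp add: card_PiE_fixed_on)
  also have "card ({1..S} - set xs) = S - length xs"
    using assms(1,3) by (simp add: card_Diff_subset distinct_card)
  finally show ?thesis .
qed

section \<open>\<open>\<rho>\<close>-shaped orbits\<close>

lemma funpow_mult_fixpoint: "(f ^^ p) x = x \<Longrightarrow> (f ^^ (q * p)) x = x"
  by (induction q) (simp_all add: funpow_add)

definition rho_path :: "('a \<Rightarrow> 'a) \<Rightarrow> 'a list \<Rightarrow> nat \<Rightarrow> bool" where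
  "rho_path f xs j \<longleftrightarrow> distinct xs \<and> j < length xs \<and> map f xs = tl xs @ [xs ! j]"

lemma rho_path_step:
  assumes "rho_path f xs j" "i < length xs"
  shows "f (xs ! i) = (if Suc i < length xs then xs ! Suc i else xs ! j)"
proof -
  have "f (xs ! i) = (tl xs @ [xs ! j]) ! i"
    using assms by (metis nth_map rho_path_def)
  then show ?thesis
    using assms(2) by (auto simp: nth_append nth_tl)
qed

lemma rho_path_funpow:
  assumes "rho_path f xs j" "i < length xs"
  shows "(f ^^ i) (hd xs) = xs ! i"
  using assms(2)
proof (induction i)
  case 0
  then show ?case by (simp add: hd_conv_nth)
next
  case (Suc i)
  then show ?case using rho_path_step[OF assms(1), of i] by simp
qed

lemma rho_path_funpow_length:
  assumes "rho_path f xs j"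
  shows "(f ^^ length xs) (hd xs) = xs ! j"
proof -
  obtain m where m: "length xs = Suc m"
    using assms by (metis rho_path_def less_imp_Suc_add)
  then show ?thesis
    using rho_path_funpow[OF assms, of m] rho_path_step[OF assms, of m] by simp
qed

lemma rho_path_funpow_ge:
  assumes "rho_path f xs j" "j \<le> n"
  shows "\<exists>i\<in>{j..<length xs}. (f ^^ n) (hd xs) = xs ! i"
  using assms(2)
proof (induction n rule: dec_induct)
  case base
  then show ?case using assms(1) rho_path_funpow by (fastforce simp: rho_path_def)
next
  case (step n)
  then obtain i where i: "i \<in> {j..<length xs}" "(f ^^ n) (hd xs) = xs ! i" by blast
  then have "(f ^^ Suc n) (hd xs) = (if Suc i < length xs then xs ! Suc i else xs ! j)"
    using rho_path_step[OF assms(1)] by simp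
  then show ?case using i assms(1) by (auto simp: rho_path_def)
qed

lemma rho_path_periodic:
  assumes "rho_path f xs j" "j \<le> n"
  shows "(f ^^ (n + (length xs - j))) (hd xs) = (f ^^ n) (hd xs)"
  using assms(2)
proof (induction n rule: dec_induct)
  case base
  then show ?case
    using assms(1) rho_path_funpow rho_path_funpow_length by (fastforce simp: rho_path_def)
next
  case (step n)
  then show ?case by simp
qed

definition cycle_from :: "nat \<Rightarrow> (nat \<Rightarrow> nat) \<Rightarrow> nat \<Rightarrow> nat set" where
  "cycle_from S f s = {t \<in> cyc_states S f. \<exists>n. (f ^^ n) s = t}"

lemma cycle1_eq_cycle_from: "cycle1 S f = cycle_from S f 1"
  by (simp add: cycle1_def cycle_from_def)

lemma cycle_from_subset: "cycle_from S f s \<subseteq> cyc_states S f"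
  by (auto simp: cycle_from_def)

lemma cyc_states_subset: "cyc_states S f \<subseteq> {1..S}"
  by (auto simp: cyc_states_def)

lemma cycle_from_rho_path:
  assumes rho: "rho_path f xs j" and xs: "set xs \<subseteq> {1..S}"
  shows "cycle_from S f (hd xs) = (!) xs ` {j..<length xs}"
proof (intro set_eqI iffI)
  fix t assume "t \<in> cycle_from S f (hd xs)"
  then obtain n p where t: "(f ^^ n) (hd xs) = t" "p > 0" "(f ^^ p) t = t"
    by (auto simp: cycle_from_def cyc_states_def)
  have "(f ^^ (j * p + n)) (hd xs) = t"
    using t funpow_mult_fixpoint[OF t(3), of j] by (simp add: funpow_add)
  moreover have "j \<le> j * p + n"
    using t(2) by (metis One_nat_def Suc_leI mult_le_mono2 mult.right_neutral trans_le_add1)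
  ultimately show "t \<in> (!) xs ` {j..<length xs}"
    using rho_path_funpow_ge[OF rho] by force
next
  fix t assume "t \<in> (!) xs ` {j..<length xs}"
  then obtain i where i: "j \<le> i" "i < length xs" "t = xs ! i" by auto
  have orbit: "(f ^^ i) (hd xs) = t" using rho_path_funpow[OF rho i(2)] i(3) by simp
  have "(f ^^ (length xs - j)) t = (f ^^ ((length xs - j) + i)) (hd xs)"
    using orbit by (simp add: funpow_add)
  also have "\<dots> = t"
    using rho_path_periodic[OF rho i(1)] orbit by (simp add: add.commute)
  finally have "(f ^^ (length xs - j)) t = t" .
  moreover have "length xs - j > 0" using i by simp
  moreover have "t \<in> {1..S}" using i xs by (metis nth_mem subsetD)
  ultimately show "t \<in> cycle_from S f (hd xs)"
    using orbit unfolding cycle_from_def cyc_states_def by blast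
qed

lemma card_cycle_from_rho_path:
  assumes "rho_path f xs j" "set xs \<subseteq> {1..S}"
  shows "card (cycle_from S f (hd xs)) = length xs - j"
proof -
  have "inj_on ((!) xs) {j..<length xs}"
    using assms(1) by (auto simp: rho_path_def inj_on_def nth_eq_iff_index_eq)
  then show ?thesis by (simp add: cycle_from_rho_path[OF assms] card_image)
qed

lemma hd_cyclic_iff_rho_path:
  assumes rho: "rho_path f xs j" and xs: "set xs \<subseteq> {1..S}"
  shows "hd xs \<in> cyc_states S f \<longleftrightarrow> j = 0"
proof -
  have "hd xs \<in> cyc_states S f \<longleftrightarrow> hd xs \<in> cycle_from S f (hd xs)"
    by (auto simp: cycle_from_def intro: exI[of _ 0])
  also have "\<dots> \<longleftrightarrow> xs ! 0 \<in> (!) xs ` {j..<length xs}"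
  proof -
    have "hd xs = xs ! 0" using rho by (cases xs) (auto simp: rho_path_def)
    then show ?thesis by (subst cycle_from_rho_path[OF rho xs]) simp
  qed
  also have "\<dots> \<longleftrightarrow> j = 0"
    using rho nth_eq_iff_index_eq[of xs 0] by (fastforce simp: rho_path_def)
  finally show ?thesis .
qed

lemma cycle_from_rho_path_0:
  assumes "rho_path f xs 0" "set xs \<subseteq> {1..S}"
  shows "cycle_from S f (hd xs) = set xs"
  using cycle_from_rho_path[OF assms] by (auto simp: in_set_conv_nth)

lemma cyclic_reachable_back:
  assumes "t \<in> cyc_states S f"
  shows "\<exists>r. (f ^^ r) ((f ^^ n) t) = t"
proof -
  obtain p where p: "p > 0" "(f ^^ p) t = t" using assms by (auto simp: cyc_states_def)
  have "n \<le> n * p"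
    using p(1) by (metis One_nat_def Suc_leI mult_le_mono2 mult.right_neutral)
  have "(f ^^ (n * p - n)) ((f ^^ n) t) = (f ^^ (n * p - n + n)) t"
    by (simp only: funpow_add comp_apply)
  also have "\<dots> = (f ^^ (n * p)) t"
    using \<open>n \<le> n * p\<close> by simp
  also have "\<dots> = t" using funpow_mult_fixpoint[OF p(2), of n] .
  finally show ?thesis by blast
qed

lemma rho_path_length_le:
  assumes xs: "rho_path f xs j" and ys: "rho_path f ys k" and hd: "hd xs = hd ys"
  shows "length xs \<le> length ys"
proof (rule ccontr)
  assume "\<not> length xs \<le> length ys"
  then have less: "length ys < length xs" by simp
  have k: "k < length ys" using ys by (simp add: rho_path_def)
  have "xs ! length ys = ys ! k"
    using rho_path_funpow[OF xs less] rho_path_funpow_length[OF ys] hd by simp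
  also have "\<dots> = xs ! k"
    using rho_path_funpow[OF ys k] rho_path_funpow[OF xs] k less hd by simp
  finally show False
    using xs k less by (simp add: rho_path_def nth_eq_iff_index_eq)
qed

lemma rho_path_unique:
  assumes xs: "rho_path f xs j" and ys: "rho_path f ys k" and hd: "hd xs = hd ys"
  shows "xs = ys \<and> j = k"
proof -
  have len: "length xs = length ys"
    using rho_path_length_le[OF xs ys hd] rho_path_length_le[OF ys xs hd[symmetric]] by simp
  have "xs = ys"
    by (rule nth_equalityI) (use len rho_path_funpow[OF xs] rho_path_funpow[OF ys] hd in auto)
  moreover have "xs ! j = xs ! k"
    using rho_path_funpow_length[OF xs] rho_path_funpow_length[OF ys] hd len \<open>xs = ys\<close> by simp
  ultimately show ?thesis
    using xs ys by (simp add: rho_path_def nth_eq_iff_index_eq)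
qed

lemma funpow_closed: "f ` A \<subseteq> A \<Longrightarrow> s \<in> A \<Longrightarrow> (f ^^ n) s \<in> A"
  by (induction n) auto

lemma funpow_first_repetition:
  assumes A: "finite A" "f ` A \<subseteq> A" and s: "s \<in> A"
  obtains k j where "j < k" "(f ^^ k) s = (f ^^ j) s" "inj_on (\<lambda>n. (f ^^ n) s) {0..<k}"
proof -
  let ?g = "\<lambda>n. (f ^^ n) s"
  let ?repeats = "\<lambda>n. \<exists>i<n. ?g n = ?g i"
  have "card (?g ` {0..card A}) \<le> card A"
    using funpow_closed[OF A(2) s] by (intro card_mono[OF A(1)]) auto
  then have "\<not> inj_on ?g {0..card A}"
    by (intro pigeonhole) simp
  then have "\<exists>n. ?repeats n"
    by (auto simp: inj_on_def) (metis linorder_neqE_nat)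
  define k where "k = (LEAST n. ?repeats n)"
  obtain j where "j < k" "?g k = ?g j"
    using LeastI_ex[OF \<open>\<exists>n. ?repeats n\<close>] by (auto simp: k_def)
  moreover have "inj_on ?g {0..<k}"
  proof (rule inj_onI)
    fix m n assume "m \<in> {0..<k}" "n \<in> {0..<k}" "?g m = ?g n"
    then show "m = n"
      using not_less_Least[of m ?repeats] not_less_Least[of n ?repeats]
      by (auto simp: k_def) (metis linorder_neqE_nat)
  qed
  ultimately show thesis using that by blast
qed

lemma rho_path_exists:
  assumes A: "finite A" "f ` A \<subseteq> A" and s: "s \<in> A"
  shows "\<exists>xs j. rho_path f xs j \<and> hd xs = s \<and> set xs \<subseteq> A"
proof -
  obtain k j where j: "j < k" "(f ^^ k) s = (f ^^ j) s" and inj: "inj_on (\<lambda>n. (f ^^ n) s) {0..<k}"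
    using funpow_first_repetition[OF assms] .
  define xs where "xs = map (\<lambda>n. (f ^^ n) s) [0..<k]"
  have "map f xs = tl xs @ [xs ! j]"
  proof (rule nth_equalityI)
    fix i assume "i < length (map f xs)"
    then have "i < k" by (simp add: xs_def)
    show "map f xs ! i = (tl xs @ [xs ! j]) ! i"
    proof (cases "Suc i < k")
      case True
      then show ?thesis by (auto simp: xs_def nth_append nth_tl)
    next
      case False
      then have "k = Suc i" using \<open>i < k\<close> by simp
      then show ?thesis using j by (auto simp: xs_def nth_append nth_tl less_Suc_eq)
    qed
  qed (use j in \<open>simp add: xs_def\<close>)
  moreover have "distinct xs" using inj by (simp add: xs_def distinct_map)
  moreover have "hd xs = s" and "j < length xs" using j by (auto simp: xs_def hd_map upt_conv_Cons)
  moreover have "set xs \<subseteq> A"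
    unfolding xs_def by (auto intro: funpow_closed[OF A(2) s])
  ultimately show ?thesis
    unfolding rho_path_def by blast
qed

section \<open>Summing over maps by orbits\<close>

definition dlists_from :: "nat \<Rightarrow> nat \<Rightarrow> nat list set" where
  "dlists_from S s = {xs. xs \<noteq> [] \<and> hd xs = s \<and> distinct xs \<and> set xs \<subseteq> {1..S}}"

lemma length_le_if_distinct: "distinct xs \<Longrightarrow> set xs \<subseteq> {1..S} \<Longrightarrow> length xs \<le> S"
  by (metis card_atLeastAtMost card_mono diff_Suc_1 distinct_card finite_atLeastAtMost)

lemma finite_dlists_from: "finite (dlists_from S s)"
  by (rule finite_subset[OF _ finite_lists_length_le[of "{1..S}" S]])
     (auto simp: dlists_from_def length_le_if_distinct)

lemma rho_path_of_maps:
  assumes "f \<in> maps S" "s \<in> {1..S}"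
  obtains xs j where "xs \<in> dlists_from S s" "rho_path f xs j"
proof -
  have "f ` {1..S} \<subseteq> {1..S}" using assms(1) by (auto simp: maps_def)
  then obtain xs j where "rho_path f xs j" "hd xs = s" "set xs \<subseteq> {1..S}"
    using rho_path_exists[of "{1..S}" f s] assms(2) by blast
  moreover have "xs \<noteq> []" using \<open>rho_path f xs j\<close> by (auto simp: rho_path_def)
  ultimately show thesis using that by (auto simp: dlists_from_def rho_path_def)
qed

lemma card_maps_rho_path:
  assumes xs: "xs \<in> dlists_from S s" and j: "j < length xs"
  shows "card {f \<in> maps S. rho_path f xs j} = S ^ (S - length xs)"
proof -
  have "set (tl xs @ [xs ! j]) \<subseteq> set xs"
    using j nth_mem[OF j] by (cases xs) auto
  then have "card {f \<in> maps S. map f xs = tl xs @ [xs ! j]} = S ^ (S - length xs)"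
    using xs by (intro card_maps_map_eq) (auto simp: dlists_from_def)
  moreover have "{f \<in> maps S. rho_path f xs j} = {f \<in> maps S. map f xs = tl xs @ [xs ! j]}"
    using xs j by (auto simp: rho_path_def dlists_from_def)
  ultimately show ?thesis by simp
qed

text \<open>Every map is counted exactly once, under the \<open>\<rho>\<close>-shaped orbit of \<open>s\<close>, which fixes
  \<open>length xs\<close> of its values and leaves the others free.\<close>

lemma sum_maps_by_rho_path:
  fixes g :: "(nat \<Rightarrow> nat) \<Rightarrow> 'a::comm_semiring_1"
  assumes s: "s \<in> {1..S}"
    and g: "\<And>f xs j. f \<in> maps S \<Longrightarrow> xs \<in> dlists_from S s \<Longrightarrow> rho_path f xs j \<Longrightarrow> g f = h xs j"
  shows "sum g (maps S)
    = (\<Sum>xs\<in>dlists_from S s. of_nat (S ^ (S - length xs)) * (\<Sum>j<length xs. h xs j))"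
proof -
  let ?I = "SIGMA xs:dlists_from S s. {..<length xs}"
  let ?M = "\<lambda>(xs, j). {f \<in> maps S. rho_path f xs j}"
  have partition: "maps S = (\<Union>p\<in>?I. ?M p)"
  proof
    show "maps S \<subseteq> (\<Union>p\<in>?I. ?M p)"
    proof
      fix f assume f: "f \<in> maps S"
      obtain xs j where "xs \<in> dlists_from S s" "rho_path f xs j"
        using rho_path_of_maps[OF f s] .
      then show "f \<in> (\<Union>p\<in>?I. ?M p)"
        using f by (intro UN_I[of "(xs, j)"]) (auto simp: rho_path_def)
    qed
  qed auto
  have disjoint: "?M p \<inter> ?M q = {}" if "p \<in> ?I" "q \<in> ?I" "p \<noteq> q" for p q
  proof -
    obtain xs j ys k where pq: "p = (xs, j)" "q = (ys, k)" by (cases p, cases q)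
    have "hd xs = hd ys" using that pq by (auto simp: dlists_from_def)
    then show ?thesis using that pq rho_path_unique[of _ xs j ys k] by auto
  qed
  have "sum g (maps S) = (\<Sum>p\<in>?I. sum g (?M p))"
    by (subst partition, rule sum.UNION_disjoint)
       (use finite_dlists_from disjoint in \<open>auto intro: finite_subset[OF _ finite_maps]\<close>)
  also have "\<dots> = (\<Sum>(xs, j)\<in>?I. of_nat (S ^ (S - length xs)) * h xs j)"
  proof (rule sum.cong[OF refl], clarify)
    fix xs j assume xs: "xs \<in> dlists_from S s" and j: "j < length xs"
    have "sum g {f \<in> maps S. rho_path f xs j} = sum (\<lambda>_. h xs j) {f \<in> maps S. rho_path f xs j}"
      using g xs by (intro sum.cong) auto
    then show "sum g {f \<in> maps S. rho_path f xs j} = of_nat (S ^ (S - length xs)) * h xs j"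
      by (simp add: card_maps_rho_path[OF xs j])
  qed
  also have "\<dots> = (\<Sum>xs\<in>dlists_from S s. of_nat (S ^ (S - length xs)) * (\<Sum>j<length xs. h xs j))"
    by (simp add: sum.Sigma[symmetric] finite_dlists_from sum_distrib_left)
  finally show ?thesis .
qed

lemma sum_maps_cyclic_at:
  fixes \<phi> :: "nat set \<Rightarrow> 'a::comm_semiring_1"
  assumes s: "s \<in> {1..S}"
  shows "(\<Sum>f\<in>maps S. of_bool (s \<in> cyc_states S f) * \<phi> (cycle_from S f s))
    = (\<Sum>xs\<in>dlists_from S s. of_nat (S ^ (S - length xs)) * \<phi> (set xs))"
proof -
  have "(\<Sum>f\<in>maps S. of_bool (s \<in> cyc_states S f) * \<phi> (cycle_from S f s))
    = (\<Sum>xs\<in>dlists_from S s. of_nat (S ^ (S - length xs))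
        * (\<Sum>j<length xs. if j = 0 then \<phi> (set xs) else 0))"
  proof (rule sum_maps_by_rho_path[OF s])
    fix f xs j assume xs: "xs \<in> dlists_from S s" and rho: "rho_path f xs j"
    have "set xs \<subseteq> {1..S}" "hd xs = s" using xs by (auto simp: dlists_from_def)
    then show "of_bool (s \<in> cyc_states S f) * \<phi> (cycle_from S f s) = (if j = 0 then \<phi> (set xs) else 0)"
      using hd_cyclic_iff_rho_path[OF rho] cycle_from_rho_path_0[of f xs S] rho by auto
  qed
  also have "\<dots> = (\<Sum>xs\<in>dlists_from S s. of_nat (S ^ (S - length xs)) * \<phi> (set xs))"
    by (intro sum.cong) (auto simp: dlists_from_def)
  finally show ?thesis .
qed

section \<open>Ramanujan's Q-function\<close>

definition falling_ratio :: "nat \<Rightarrow> nat \<Rightarrow> real" where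
  "falling_ratio S k = (\<Prod>i<k. real (S - i)) / real S ^ k"

definition ramanujan_Q :: "nat \<Rightarrow> real" where
  "ramanujan_Q S = (\<Sum>k=1..S. falling_ratio S k)"

lemma falling_ratio_nonneg: "0 \<le> falling_ratio S k"
  by (simp add: falling_ratio_def prod_nonneg)

lemma ramanujan_Q_nonneg: "0 \<le> ramanujan_Q S"
  by (simp add: ramanujan_Q_def sum_nonneg falling_ratio_nonneg)

lemma falling_ratio_Suc: "falling_ratio S (Suc k) = falling_ratio S k * real (S - k) / real S"
  by (simp add: falling_ratio_def)

lemma falling_ratio_one: "S \<ge> 1 \<Longrightarrow> falling_ratio S 1 = 1"
  by (simp add: falling_ratio_def)

lemma falling_ratio_beyond: "falling_ratio S (Suc S) = 0"
  by (simp add: falling_ratio_Suc)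

text \<open>The recurrence below makes the moments \<open>\<Sum> a\<^sub>k k\<close> and \<open>\<Sum> a\<^sub>k k (k + 1)\<close> telescope.\<close>

lemma falling_ratio_mult:
  assumes "S \<ge> 1" "k \<le> S"
  shows "falling_ratio S k * real k = real S * (falling_ratio S k - falling_ratio S (Suc k))"
  using assms by (simp add: falling_ratio_Suc of_nat_diff field_simps)

lemma sum_telescope_atLeastAtMost:
  fixes T :: "nat \<Rightarrow> 'a::ab_group_add"
  shows "(\<Sum>k=1..n. T k - T (Suc k)) = T 1 - T (Suc n)"
  by (induction n) (simp_all add: sum.cl_ivl_Suc)

lemma sum_telescope_atLeastAtMost_weighted:
  fixes T :: "nat \<Rightarrow> real"
  shows "(\<Sum>k=1..n. (T k - T (Suc k)) * (real k + 1))
    = T 1 + (\<Sum>k=1..n. T k) - (real n + 1) * T (Suc n)"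
  by (induction n) (simp_all add: sum.cl_ivl_Suc algebra_simps)

lemma sum_falling_ratio_mult:
  assumes "S \<ge> 1"
  shows "(\<Sum>k=1..S. falling_ratio S k * real k) = real S"
proof -
  have "(\<Sum>k=1..S. falling_ratio S k * real k)
      = real S * (\<Sum>k=1..S. falling_ratio S k - falling_ratio S (Suc k))"
    using assms by (simp add: falling_ratio_mult sum_distrib_left)
  also have "\<dots> = real S"
    unfolding sum_telescope_atLeastAtMost using falling_ratio_one[OF assms] falling_ratio_beyond by simp
  finally show ?thesis .
qed

lemma sum_falling_ratio_mult_Suc:
  assumes "S \<ge> 1"
  shows "(\<Sum>k=1..S. falling_ratio S k * (real k * (real k + 1))) = real S * (1 + ramanujan_Q S)"
proof -
  have "(\<Sum>k=1..S. falling_ratio S k * (real k * (real k + 1)))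
      = real S * (\<Sum>k=1..S. (falling_ratio S k - falling_ratio S (Suc k)) * (real k + 1))"
    using assms by (simp add: falling_ratio_mult sum_distrib_left mult.assoc[symmetric])
  also have "\<dots> = real S * (1 + ramanujan_Q S)"
    unfolding sum_telescope_atLeastAtMost_weighted ramanujan_Q_def
    using falling_ratio_one[OF assms] falling_ratio_beyond by simp
  finally show ?thesis .
qed

lemma prod_atLeastAtMost_eq_falling: "k \<le> n \<Longrightarrow> \<Prod>{n - k + 1..n} = (\<Prod>i<k. n - i)" for k n :: nat
proof (induction k)
  case (Suc k)
  then have "\<Prod>{n - Suc k + 1..n} = (n - k) * \<Prod>{n - k + 1..n}"
    by (simp add: prod.atLeast_Suc_atMost Suc_diff_Suc)
  then show ?case using Suc by (simp add: prod.lessThan_Suc)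
qed simp

lemma card_distinct_lists_length:
  assumes "finite A"
  shows "card {xs. length xs = k \<and> distinct xs \<and> set xs \<subseteq> A} = (\<Prod>i<k. card A - i)"
proof (cases "k \<le> card A")
  case True
  then show ?thesis
    by (simp only: card_lists_distinct_length_eq[OF assms True] prod_atLeastAtMost_eq_falling)
next
  case False
  have empty: "{xs. length xs = k \<and> distinct xs \<and> set xs \<subseteq> A} = {}"
  proof (intro equals0I)
    fix xs assume xs: "xs \<in> {xs. length xs = k \<and> distinct xs \<and> set xs \<subseteq> A}"
    then have "length xs \<le> card A"
      using card_mono[OF assms] distinct_card by (metis (mono_tags) mem_Collect_eq)
    then show False using False xs by simp
  qed
  have "(\<Prod>i<k. card A - i) = 0"
    using False by (intro prod_zero bexI[of _ "card A"]) auto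
  then show ?thesis by (simp only: empty card.empty)
qed

lemma card_dlists_from_length:
  assumes s: "s \<in> {1..S}" and k: "k \<ge> 1"
  shows "S * card {xs \<in> dlists_from S s. length xs = k} = (\<Prod>i<k. S - i)"
proof -
  let ?L = "{ys. length ys = k - 1 \<and> distinct ys \<and> set ys \<subseteq> {1..S} - {s}}"
  have "{xs \<in> dlists_from S s. length xs = k} = Cons s ` ?L"
  proof (intro set_eqI iffI)
    fix xs assume xs: "xs \<in> {xs \<in> dlists_from S s. length xs = k}"
    then obtain ys where "xs = s # ys" by (cases xs) (auto simp: dlists_from_def)
    with xs show "xs \<in> Cons s ` ?L" by (auto simp: dlists_from_def)
  qed (use s k in \<open>auto simp: dlists_from_def\<close>)
  then have "card {xs \<in> dlists_from S s. length xs = k} = (\<Prod>i<k - 1. S - 1 - i)"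
    using s by (simp add: card_image card_distinct_lists_length)
  moreover have "(\<Prod>i<k. S - i) = S * (\<Prod>i<k - 1. S - 1 - i)"
    using k prod.lessThan_Suc_shift[of "\<lambda>i. S - i" "k - 1"] by simp
  ultimately show ?thesis by simp
qed

lemma sum_dlists_from_by_length:
  fixes h :: "nat \<Rightarrow> real"
  assumes s: "s \<in> {1..S}"
  shows "(\<Sum>xs\<in>dlists_from S s. real S ^ (S - length xs) * h (length xs))
    = real S ^ S * (\<Sum>k=1..S. falling_ratio S k * h k) / real S"
proof -
  have group: "(\<Sum>xs\<in>dlists_from S s. real S ^ (S - length xs) * h (length xs))
      = (\<Sum>k=1..S. real (card {xs \<in> dlists_from S s. length xs = k}) * (real S ^ (S - k) * h k))"
    by (subst sum.group[symmetric, OF finite_dlists_from finite_atLeastAtMost, of length])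
       (auto simp: dlists_from_def length_le_if_distinct Suc_le_eq)
  have weight: "real S * real (card {xs \<in> dlists_from S s. length xs = k}) * real S ^ (S - k)
      = real S ^ S * falling_ratio S k" if "k \<in> {1..S}" for k
  proof -
    have "real S * real (card {xs \<in> dlists_from S s. length xs = k}) = (\<Prod>i<k. real (S - i))"
      using card_dlists_from_length[OF s, of k] that by (simp flip: of_nat_mult)
    moreover have "real S ^ k * real S ^ (S - k) = real S ^ S"
      using that by (simp flip: power_add)
    ultimately show ?thesis
      using s by (simp add: falling_ratio_def field_simps)
  qed
  have "real S * (\<Sum>xs\<in>dlists_from S s. real S ^ (S - length xs) * h (length xs))
      = (\<Sum>k=1..S. real S * (real (card {xs \<in> dlists_from S s. length xs = k}) * (real S ^ (S - k) * h k)))"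
    unfolding group sum_distrib_left ..
  also have "\<dots> = (\<Sum>k=1..S. real S ^ S * falling_ratio S k * h k)"
    by (intro sum.cong refl) (simp only: weight mult.assoc[symmetric])
  finally show ?thesis
    using s by (simp add: sum_distrib_left mult.assoc field_simps)
qed

section \<open>Moments of the number of cyclic states\<close>

lemma real_card_eq_sum_of_bool: "finite B \<Longrightarrow> A \<subseteq> B \<Longrightarrow> real (card A) = (\<Sum>x\<in>B. of_bool (x \<in> A))"
  by (simp add: Int_absorb1)

lemma real_numC_eq: "real (numC S f) = (\<Sum>s\<in>{1..S}. of_bool (s \<in> cyc_states S f))"
  unfolding numC_def by (rule real_card_eq_sum_of_bool[OF finite_atLeastAtMost cyc_states_subset])

lemma numC_le: "numC S f \<le> S"
  unfolding numC_def using card_mono[OF _ cyc_states_subset, of S f] by simp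

lemma sum_lessThan_diff_real: "(\<Sum>j<k. real (k - j)) = real k * (real k + 1) / 2"
proof (induction k)
  case (Suc k)
  have "(\<Sum>j<Suc k. real (Suc k - j)) = real (Suc k) + (\<Sum>j<k. real (k - j))"
    by (subst sum.lessThan_Suc_shift) simp
  then show ?case using Suc by (simp add: field_simps)
qed simp

lemma sum_numC:
  assumes "S \<ge> 1"
  shows "(\<Sum>f\<in>maps S. real (numC S f)) = real S ^ S * ramanujan_Q S"
proof -
  have "(\<Sum>f\<in>maps S. real (numC S f)) = (\<Sum>s\<in>{1..S}. \<Sum>f\<in>maps S. of_bool (s \<in> cyc_states S f) * 1)"
    unfolding real_numC_eq by (simp add: sum.swap[of _ "maps S"])
  also have "\<dots> = (\<Sum>s\<in>{1..S}. \<Sum>xs\<in>dlists_from S s. real S ^ (S - length xs) * 1)"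
  proof (intro sum.cong refl)
    fix s assume "s \<in> {1..S}"
    then show "(\<Sum>f\<in>maps S. of_bool (s \<in> cyc_states S f) * 1)
        = (\<Sum>xs\<in>dlists_from S s. real S ^ (S - length xs) * 1)"
      using sum_maps_cyclic_at[where \<phi> = "\<lambda>_. 1::real"] by simp
  qed
  also have "\<dots> = (\<Sum>s\<in>{1..S}. real S ^ S * ramanujan_Q S / real S)"
    by (intro sum.cong refl) (simp add: sum_dlists_from_by_length[where h = "\<lambda>_. 1", simplified] ramanujan_Q_def)
  also have "\<dots> = real S ^ S * ramanujan_Q S"
    using assms by simp
  finally show ?thesis .
qed

lemma sum_numC1:
  assumes "S \<ge> 1"
  shows "(\<Sum>f\<in>maps S. real (numC1 S f)) = real S ^ S * (1 + ramanujan_Q S) / 2"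
proof -
  have one: "(1::nat) \<in> {1..S}" using assms by simp
  have "(\<Sum>f\<in>maps S. real (numC1 S f))
      = (\<Sum>xs\<in>dlists_from S 1. of_nat (S ^ (S - length xs)) * (\<Sum>j<length xs. real (length xs - j)))"
  proof (rule sum_maps_by_rho_path[OF one])
    fix f xs j assume "xs \<in> dlists_from S 1" "rho_path f xs j"
    then show "real (numC1 S f) = real (length xs - j)"
      using card_cycle_from_rho_path[of f xs j S]
      by (simp add: dlists_from_def numC1_def cycle1_eq_cycle_from)
  qed
  also have "\<dots> = (\<Sum>xs\<in>dlists_from S 1. real S ^ (S - length xs) * (real (length xs) * (real (length xs) + 1) / 2))"
    by (simp only: sum_lessThan_diff_real of_nat_power)
  also have "\<dots> = real S ^ S * (\<Sum>k=1..S. falling_ratio S k * (real k * (real k + 1) / 2)) / real S"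
    by (rule sum_dlists_from_by_length[OF one])
  also have "(\<Sum>k=1..S. falling_ratio S k * (real k * (real k + 1) / 2)) = real S * (1 + ramanujan_Q S) / 2"
    unfolding times_divide_eq_right sum_divide_distrib[symmetric] sum_falling_ratio_mult_Suc[OF assms] ..
  also have "real S ^ S * (real S * (1 + ramanujan_Q S) / 2) / real S = real S ^ S * (1 + ramanujan_Q S) / 2"
    using assms by simp
  finally show ?thesis .
qed

lemma real_numC_squared:
  "real (numC S f) ^ 2
    = (\<Sum>s\<in>{1..S}. of_bool (s \<in> cyc_states S f) * real (card (cycle_from S f s)))
    + (\<Sum>s\<in>{1..S}. \<Sum>t\<in>{1..S}.
        of_bool (s \<in> cyc_states S f \<and> t \<in> cyc_states S f \<and> t \<notin> cycle_from S f s))"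
proof -
  have split: "(of_bool (s \<in> cyc_states S f) * of_bool (t \<in> cyc_states S f) :: real)
      = of_bool (s \<in> cyc_states S f) * of_bool (t \<in> cycle_from S f s)
      + of_bool (s \<in> cyc_states S f \<and> t \<in> cyc_states S f \<and> t \<notin> cycle_from S f s)" for s t
    using cycle_from_subset[of S f s] by (auto simp: of_bool_def)
  have cycle_size: "(\<Sum>t\<in>{1..S}. of_bool (t \<in> cycle_from S f s)) = real (card (cycle_from S f s))" for s
    by (rule real_card_eq_sum_of_bool[symmetric])
       (use cycle_from_subset cyc_states_subset in blast)+
  have "real (numC S f) ^ 2
      = (\<Sum>s\<in>{1..S}. \<Sum>t\<in>{1..S}. of_bool (s \<in> cyc_states S f) * of_bool (t \<in> cyc_states S f))"
    unfolding real_numC_eq power2_eq_square sum_product ..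
  also have "\<dots> = (\<Sum>s\<in>{1..S}. of_bool (s \<in> cyc_states S f) * real (card (cycle_from S f s)))
      + (\<Sum>s\<in>{1..S}. \<Sum>t\<in>{1..S}.
          of_bool (s \<in> cyc_states S f \<and> t \<in> cyc_states S f \<and> t \<notin> cycle_from S f s))"
    unfolding split sum.distrib sum_distrib_left[symmetric] cycle_size ..
  finally show ?thesis .
qed

lemma sum_cycle_sizes:
  assumes "S \<ge> 1"
  shows "(\<Sum>f\<in>maps S. \<Sum>s\<in>{1..S}. of_bool (s \<in> cyc_states S f) * real (card (cycle_from S f s)))
    = real S * real S ^ S"
proof -
  have per_state: "(\<Sum>f\<in>maps S. of_bool (s \<in> cyc_states S f) * real (card (cycle_from S f s))) = real S ^ S"
    if s: "s \<in> {1..S}" for s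
  proof -
    have "(\<Sum>f\<in>maps S. of_bool (s \<in> cyc_states S f) * real (card (cycle_from S f s)))
        = (\<Sum>xs\<in>dlists_from S s. real S ^ (S - length xs) * real (card (set xs)))"
      using sum_maps_cyclic_at[OF s, where \<phi> = "\<lambda>A. real (card A)"] by simp
    also have "\<dots> = (\<Sum>xs\<in>dlists_from S s. real S ^ (S - length xs) * real (length xs))"
      by (intro sum.cong refl) (simp add: dlists_from_def distinct_card)
    also have "\<dots> = real S ^ S"
      using sum_dlists_from_by_length[OF s, of real] sum_falling_ratio_mult[OF assms] assms by simp
    finally show ?thesis .
  qed
  have "(\<Sum>f\<in>maps S. \<Sum>s\<in>{1..S}. of_bool (s \<in> cyc_states S f) * real (card (cycle_from S f s)))
      = (\<Sum>s\<in>{1..S}. \<Sum>f\<in>maps S. of_bool (s \<in> cyc_states S f) * real (card (cycle_from S f s)))"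
    by (rule sum.swap)
  also have "\<dots> = (\<Sum>s\<in>{1..S}. real S ^ S)"
    by (simp only: per_state cong: sum.cong)
  finally show ?thesis by simp
qed

text \<open>Cyclic states on different cycles have disjoint cycles as their orbits, so \<open>f\<close> is then
  prescribed on both orbits at once.\<close>

lemma disjoint_cycles_subset:
  assumes s: "s \<in> {1..S}" and t: "t \<in> {1..S}"
  shows "{f \<in> maps S. s \<in> cyc_states S f \<and> t \<in> cyc_states S f \<and> t \<notin> cycle_from S f s}
    \<subseteq> (\<Union>(xs, ys)\<in>{(xs, ys) \<in> dlists_from S s \<times> dlists_from S t. set xs \<inter> set ys = {}}.
          {f \<in> maps S. map f (xs @ ys) = rotate1 xs @ rotate1 ys})"
proof
  fix f assume f: "f \<in> {f \<in> maps S. s \<in> cyc_states S f \<and> t \<in> cyc_states S f \<and> t \<notin> cycle_from S f s}"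
  obtain xs j where xs: "xs \<in> dlists_from S s" "rho_path f xs j"
    using rho_path_of_maps[OF _ s] f by blast
  obtain ys k where ys: "ys \<in> dlists_from S t" "rho_path f ys k"
    using rho_path_of_maps[OF _ t] f by blast
  have xs_in: "set xs \<subseteq> {1..S}" "hd xs = s" and ys_in: "set ys \<subseteq> {1..S}" "hd ys = t"
    using xs(1) ys(1) by (auto simp: dlists_from_def)
  have "j = 0" "k = 0"
    using hd_cyclic_iff_rho_path[OF xs(2) xs_in(1)] hd_cyclic_iff_rho_path[OF ys(2) ys_in(1)] f xs_in ys_in
    by auto
  then have rho: "rho_path f xs 0" "rho_path f ys 0" using xs ys by auto
  have cycle_s: "cycle_from S f s = set xs" and cycle_t: "cycle_from S f t = set ys"
    using cycle_from_rho_path_0[OF rho(1) xs_in(1)] cycle_from_rho_path_0[OF rho(2) ys_in(1)] xs_in ys_in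
    by simp_all
  have "set xs \<inter> set ys = {}"
  proof (rule ccontr)
    assume "set xs \<inter> set ys \<noteq> {}"
    then obtain u where "u \<in> cycle_from S f s" "u \<in> cycle_from S f t"
      unfolding cycle_s cycle_t by blast
    then obtain n m where "(f ^^ n) s = u" "(f ^^ m) t = u"
      by (auto simp: cycle_from_def)
    moreover obtain r where "(f ^^ r) ((f ^^ m) t) = t"
      using cyclic_reachable_back f by blast
    ultimately have "(f ^^ (r + n)) s = t" by (simp add: funpow_add)
    then show False using f by (auto simp: cycle_from_def)
  qed
  moreover have "map f (xs @ ys) = rotate1 xs @ rotate1 ys"
    using rho by (cases xs; cases ys) (simp_all add: rho_path_def)
  ultimately show "f \<in> (\<Union>(xs, ys)\<in>{(xs, ys) \<in> dlists_from S s \<times> dlists_from S t. set xs \<inter> set ys = {}}.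
      {f \<in> maps S. map f (xs @ ys) = rotate1 xs @ rotate1 ys})"
    using xs ys f by (intro UN_I[of "(xs, ys)"]) auto
qed

lemma card_maps_disjoint_cycles:
  assumes xs: "xs \<in> dlists_from S s" and ys: "ys \<in> dlists_from S t" and disj: "set xs \<inter> set ys = {}"
  shows "real (card {f \<in> maps S. map f (xs @ ys) = rotate1 xs @ rotate1 ys}) * real S ^ S
    = real S ^ (S - length xs) * real S ^ (S - length ys)"
proof -
  have distinct: "distinct (xs @ ys)" and range: "set (xs @ ys) \<subseteq> {1..S}"
    using xs ys disj by (auto simp: dlists_from_def)
  have targets: "set (rotate1 xs @ rotate1 ys) \<subseteq> {1..S}"
    using range by simp
  have "length (rotate1 xs @ rotate1 ys) = length (xs @ ys)"
    by simp
  then have card: "card {f \<in> maps S. map f (xs @ ys) = rotate1 xs @ rotate1 ys}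
      = S ^ (S - length (xs @ ys))"
    by (rule card_maps_map_eq[OF distinct _ range targets])
  have exponents: "S - length (xs @ ys) + S = (S - length xs) + (S - length ys)"
    using length_le_if_distinct[OF distinct range] by simp
  have "real (card {f \<in> maps S. map f (xs @ ys) = rotate1 xs @ rotate1 ys}) * real S ^ S
      = real S ^ (S - length (xs @ ys) + S)"
    by (simp only: card of_nat_power power_add)
  also have "\<dots> = real S ^ (S - length xs) * real S ^ (S - length ys)"
    by (simp only: exponents power_add)
  finally show ?thesis .
qed

lemma card_disjoint_cycles_le:
  assumes s: "s \<in> {1..S}" and t: "t \<in> {1..S}"
  shows "real (card {f \<in> maps S. s \<in> cyc_states S f \<and> t \<in> cyc_states S f \<and> t \<notin> cycle_from S f s})
      * real S ^ S
    \<le> (\<Sum>xs\<in>dlists_from S s. real S ^ (S - length xs)) * (\<Sum>ys\<in>dlists_from S t. real S ^ (S - length ys))"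
proof -
  let ?J = "{(xs, ys) \<in> dlists_from S s \<times> dlists_from S t. set xs \<inter> set ys = {}}"
  let ?M = "\<lambda>(xs, ys). {f \<in> maps S. map f (xs @ ys) = rotate1 xs @ rotate1 ys}"
  have finite_J: "finite ?J"
    by (rule finite_subset[of _ "dlists_from S s \<times> dlists_from S t"]) (auto simp: finite_dlists_from)
  have "card {f \<in> maps S. s \<in> cyc_states S f \<and> t \<in> cyc_states S f \<and> t \<notin> cycle_from S f s}
      \<le> card (\<Union>p\<in>?J. ?M p)"
    by (rule card_mono[OF _ disjoint_cycles_subset[OF s t]]) (auto intro: finite_subset[OF _ finite_maps])
  also have "\<dots> \<le> (\<Sum>p\<in>?J. card (?M p))"
    by (rule card_UN_le[OF finite_J])
  finally have "real (card {f \<in> maps S. s \<in> cyc_states S f \<and> t \<in> cyc_states S f \<and> t \<notin> cycle_from S f s})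
      \<le> real (\<Sum>p\<in>?J. card (?M p))"
    by (rule of_nat_mono)
  then have "real (card {f \<in> maps S. s \<in> cyc_states S f \<and> t \<in> cyc_states S f \<and> t \<notin> cycle_from S f s})
      * real S ^ S \<le> real (\<Sum>p\<in>?J. card (?M p)) * real S ^ S"
    by (rule mult_right_mono) simp
  also have "\<dots> = (\<Sum>p\<in>?J. real (card (?M p)) * real S ^ S)"
    by (simp only: of_nat_sum sum_distrib_right)
  also have "\<dots> = (\<Sum>(xs, ys)\<in>?J. real S ^ (S - length xs) * real S ^ (S - length ys))"
    by (intro sum.cong refl) (auto simp del: map_append simp add: card_maps_disjoint_cycles)
  also have "\<dots> \<le> (\<Sum>(xs, ys)\<in>dlists_from S s \<times> dlists_from S t. real S ^ (S - length xs) * real S ^ (S - length ys))"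
    by (rule sum_mono2) (auto simp: finite_dlists_from)
  also have "\<dots> = (\<Sum>xs\<in>dlists_from S s. real S ^ (S - length xs)) * (\<Sum>ys\<in>dlists_from S t. real S ^ (S - length ys))"
    by (simp add: sum_product sum.cartesian_product)
  finally show ?thesis .
qed

lemma sum_numC_squared_le:
  assumes "S \<ge> 1"
  shows "(\<Sum>f\<in>maps S. real (numC S f) ^ 2) \<le> real S ^ S * (real S + ramanujan_Q S ^ 2)"
proof -
  define W where "W s = (\<Sum>xs\<in>dlists_from S s. real S ^ (S - length xs))" for s
  have W: "W s = real S ^ S * ramanujan_Q S / real S" if "s \<in> {1..S}" for s
    using sum_dlists_from_by_length[OF that, where h = "\<lambda>_. 1"] by (simp add: W_def ramanujan_Q_def)
  have "(\<Sum>f\<in>maps S. real (numC S f) ^ 2)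
      = real S * real S ^ S + (\<Sum>s\<in>{1..S}. \<Sum>t\<in>{1..S}. \<Sum>f\<in>maps S.
          of_bool (s \<in> cyc_states S f \<and> t \<in> cyc_states S f \<and> t \<notin> cycle_from S f s))"
    unfolding real_numC_squared sum.distrib sum_cycle_sizes[OF assms]
    by (simp only: sum.swap[of _ "maps S"])
  also have "\<dots> \<le> real S * real S ^ S + (\<Sum>s\<in>{1..S}. \<Sum>t\<in>{1..S}. W s * W t / real S ^ S)"
  proof (intro add_left_mono sum_mono)
    fix s t assume s: "s \<in> {1..S}" and t: "t \<in> {1..S}"
    show "(\<Sum>f\<in>maps S. of_bool (s \<in> cyc_states S f \<and> t \<in> cyc_states S f \<and> t \<notin> cycle_from S f s))
        \<le> W s * W t / real S ^ S"
    proof -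
      have "(\<Sum>f\<in>maps S. of_bool (s \<in> cyc_states S f \<and> t \<in> cyc_states S f \<and> t \<notin> cycle_from S f s))
          = real (card {f \<in> maps S. s \<in> cyc_states S f \<and> t \<in> cyc_states S f \<and> t \<notin> cycle_from S f s})"
        by (simp add: finite_maps Int_def)
      then show ?thesis
        using card_disjoint_cycles_le[OF s t] assms by (simp add: W_def pos_le_divide_eq)
    qed
  qed
  also have "\<dots> = real S ^ S * (real S + ramanujan_Q S ^ 2)"
    using assms by (simp add: W power2_eq_square field_simps)
  finally show ?thesis .
qed

lemma expectation_rmap: "measure_pmf.expectation (rmap S) X = sum X (maps S) / real S ^ S"
  unfolding rmap_def by (simp add: integral_pmf_of_set[OF maps_nonempty finite_maps] card_maps)

lemma variance_rmap:
  fixes X :: "(nat \<Rightarrow> nat) \<Rightarrow> real"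
  shows "measure_pmf.variance (rmap S) X
    = measure_pmf.expectation (rmap S) (\<lambda>f. X f ^ 2) - (measure_pmf.expectation (rmap S) X)\<^sup>2"
proof -
  have "finite (set_pmf (rmap S))"
    by (simp add: rmap_def maps_nonempty finite_maps)
  then show ?thesis
    by (intro measure_pmf.variance_eq) (auto intro: integrable_measure_pmf_finite)
qed

lemma expectation_numC: "S \<ge> 1 \<Longrightarrow> measure_pmf.expectation (rmap S) (\<lambda>f. real (numC S f)) = ramanujan_Q S"
  by (simp add: expectation_rmap sum_numC)

lemma expectation_numC1:
  "S \<ge> 1 \<Longrightarrow> measure_pmf.expectation (rmap S) (\<lambda>f. real (numC1 S f)) = (1 + ramanujan_Q S) / 2"
  by (simp add: expectation_rmap sum_numC1)

lemma variance_numC_le: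
  assumes "S \<ge> 1"
  shows "measure_pmf.variance (rmap S) (\<lambda>f. real (numC S f)) \<le> real S"
proof -
  have "measure_pmf.expectation (rmap S) (\<lambda>f. real (numC S f) ^ 2)
      = (\<Sum>f\<in>maps S. real (numC S f) ^ 2) / real S ^ S"
    by (rule expectation_rmap)
  also have "\<dots> \<le> real S ^ S * (real S + ramanujan_Q S ^ 2) / real S ^ S"
    by (rule divide_right_mono[OF sum_numC_squared_le[OF assms]]) simp
  also have "\<dots> = real S + ramanujan_Q S ^ 2"
    using assms by simp
  finally have "measure_pmf.expectation (rmap S) (\<lambda>f. real (numC S f) ^ 2) \<le> real S + ramanujan_Q S ^ 2" .
  moreover have "measure_pmf.variance (rmap S) (\<lambda>f. real (numC S f))
      = measure_pmf.expectation (rmap S) (\<lambda>f. real (numC S f) ^ 2) - ramanujan_Q S ^ 2"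
    by (subst variance_rmap) (simp only: expectation_numC[OF assms])
  ultimately show ?thesis by linarith
qed

lemma ramanujan_Q_le: "S \<ge> 1 \<Longrightarrow> ramanujan_Q S \<le> real S"
proof -
  assume S: "S \<ge> 1"
  have "(\<Sum>f\<in>maps S. real (numC S f)) \<le> (\<Sum>f\<in>maps S. real S)"
    by (intro sum_mono) (simp add: numC_le)
  then show ?thesis
    using S by (simp add: sum_numC card_maps)
qed

lemma ln_ge_one_minus_inverse: "x > 0 \<Longrightarrow> 1 - 1 / x \<le> ln x" for x :: real
  using ln_le_minus_one[of "1 / x"] by (simp add: ln_div)

lemma less_half_one_plus_times_ln_plus_one:
  assumes S: "real S \<ge> 2" and x: "0 \<le> x" "x \<le> real S"
  shows "x < (1 + x) / 2 * (ln (real S) + 1)"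
proof -
  have "x < (1 + x) / 2 * (2 - 1 / real S)"
    using S x by (simp add: field_simps)
  also have "\<dots> \<le> (1 + x) / 2 * (ln (real S) + 1)"
    using ln_ge_one_minus_inverse[of "real S"] S x by (intro mult_left_mono) auto
  finally show ?thesis .
qed

theorem lemma1:
  shows "(\<forall>S::nat. S \<ge> 2 \<longrightarrow>
            measure_pmf.expectation (rmap S) (\<lambda>f. real (numC S f))
            < measure_pmf.expectation (rmap S) (\<lambda>f. real (numC1 S f)) * (ln (real S) + 1))
       \<and> (\<exists>K::real. K > 0 \<and> (\<forall>S::nat. S \<ge> 2 \<longrightarrow>
            measure_pmf.variance (rmap S) (\<lambda>f. real (numC S f)) \<le> K * real S * ln (real S)))"
proof (intro conjI allI impI exI[of _ 2])
  fix S :: nat assume S: "S \<ge> 2"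
  then show "measure_pmf.expectation (rmap S) (\<lambda>f. real (numC S f))
      < measure_pmf.expectation (rmap S) (\<lambda>f. real (numC1 S f)) * (ln (real S) + 1)"
    using less_half_one_plus_times_ln_plus_one[OF _ ramanujan_Q_nonneg ramanujan_Q_le, of S]
    by (simp add: expectation_numC expectation_numC1)
next
  fix S :: nat assume S: "S \<ge> 2"
  have "1 / 2 \<le> 1 - 1 / real S"
    using S by (simp add: field_simps)
  then have "1 / 2 \<le> ln (real S)"
    using ln_ge_one_minus_inverse[of "real S"] S by linarith
  then have "real S \<le> 2 * real S * ln (real S)"
    using mult_left_mono[of "1 / 2" "ln (real S)" "2 * real S"] by simp
  moreover have "measure_pmf.variance (rmap S) (\<lambda>f. real (numC S f)) \<le> real S"
    using S by (intro variance_numC_le) simp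
  ultimately show "measure_pmf.variance (rmap S) (\<lambda>f. real (numC S f)) \<le> 2 * real S * ln (real S)"
    by linarith
qed simp

end
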